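(* Let $\pi\in S_n$. The set of source cells of $\beta_\pi$ is exactly $\{B_{i,\pi(i)}:1\le i\le n\}$, where $B_{i,j}$ denotes the 4-cell of $G$ with top $c_i\vee d_j$.
   Context: $G$ is the direct product of chains $0=c_0\prec\dots\prec c_n$ and $0=d_0\prec\dots\prec d_n$, elements written $c_i\vee d_j$. For $i,j\ge1$, $B_{i,j}=\{c_{i-1}\vee d_{j-1},c_{i-1}\vee d_j,c_i\vee d_{j-1},c_i\vee d_j\}$. For a join-congruence $\alpha$ (equivalence compatible with $\vee$), $B_{i,j}$ is a source cell of $\alpha$ if $c_{i-1}\vee d_j$, $c_i\vee d_{j-1}$, $c_i\vee d_j$ lie in one $\alpha$-class not containing $c_{i-1}\vee d_{j-1}$. For $\pi\in S_n$, $\beta_\pi$ is the join, in the lattice of join-congruences of $(G;\vee)$, of the smallest join-congruences collapsing $\{c_{i-1}\vee d_{\pi(i)},c_i\vee d_{\pi(i)-1},c_i\vee d_{\pi(i)}\}$, $i=1,\dots,n$. *)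

theory Defs
  imports "HOL-Combinatorics.Permutations"
begin

text \<open>The grid G = chain {0..n} x chain {0..n}; the pair (i,j) stands for c_i \<or> d_j.\<close>
definition grid :: "nat \<Rightarrow> (nat \<times> nat) set" where
  "grid n = {0..n} \<times> {0..n}"

definition gjoin :: "nat \<times> nat \<Rightarrow> nat \<times> nat \<Rightarrow> nat \<times> nat" where
  "gjoin x y = (max (fst x) (fst y), max (snd x) (snd y))"

definition join_cong :: "nat \<Rightarrow> ((nat \<times> nat) \<times> (nat \<times> nat)) set \<Rightarrow> bool" where
  "join_cong n \<alpha> \<longleftrightarrow> equiv (grid n) \<alpha> \<and>
     (\<forall>x y u v. (x, y) \<in> \<alpha> \<longrightarrow> (u, v) \<in> \<alpha> \<longrightarrow> (gjoin x u, gjoin y v) \<in> \<alpha>)"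

definition cong_gen :: "nat \<Rightarrow> ((nat \<times> nat) \<times> (nat \<times> nat)) set \<Rightarrow> ((nat \<times> nat) \<times> (nat \<times> nat)) set" where
  "cong_gen n R = \<Inter> {\<alpha>. join_cong n \<alpha> \<and> R \<subseteq> \<alpha>}"

definition con_set :: "nat \<Rightarrow> (nat \<times> nat) set \<Rightarrow> ((nat \<times> nat) \<times> (nat \<times> nat)) set" where
  "con_set n S = cong_gen n (S \<times> S)"

definition cong_Join :: "nat \<Rightarrow> ((nat \<times> nat) \<times> (nat \<times> nat)) set set \<Rightarrow> ((nat \<times> nat) \<times> (nat \<times> nat)) set" where
  "cong_Join n A = cong_gen n (\<Union> A)"

definition triple :: "nat \<Rightarrow> nat \<Rightarrow> (nat \<times> nat) set" where
  "triple i j = {(i - 1, j), (i, j - 1), (i, j)}"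

definition beta :: "nat \<Rightarrow> (nat \<Rightarrow> nat) \<Rightarrow> ((nat \<times> nat) \<times> (nat \<times> nat)) set" where
  "beta n \<pi> = cong_Join n {con_set n (triple i (\<pi> i)) | i. i \<in> {1..n}}"

text \<open>B_{i,j} (i,j \<ge> 1) is a source cell of \<alpha>: the three upper elements lie in one class
  not containing the bottom c_{i-1} \<or> d_{j-1}.\<close>
definition source_cell :: "((nat \<times> nat) \<times> (nat \<times> nat)) set \<Rightarrow> nat \<Rightarrow> nat \<Rightarrow> bool" where
  "source_cell \<alpha> i j \<longleftrightarrow>
     ((i - 1, j), (i, j)) \<in> \<alpha> \<and> ((i, j - 1), (i, j)) \<in> \<alpha> \<and> ((i - 1, j - 1), (i, j)) \<notin> \<alpha>"

end

theory Submission
  imports Defs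
begin

(*
  For each k, the join-congruence with the two classes \<down>(c_(k-1) \<or> d_(\<pi>(k)-1)) and its complement
  collapses every generating triple of \<beta>_\<pi>, because \<pi> is injective; hence it contains \<beta>_\<pi>.
  With k = i this separates the bottom of B_(i,\<pi>(i)) from its top. It also excludes a source cell
  B_(i,j) with j < \<pi>(i) (take k = i), or with j > \<pi>(i) and \<pi>\<inverse>(j) > i (take k = \<pi>\<inverse>(j)).
  If j > \<pi>(i) and k = \<pi>\<inverse>(j) < i, then joining the collapsed edge c_(i-1) \<or> d_(\<pi>(i)) \<equiv> c_i \<or> d_(\<pi>(i))
  with c_(i-1) \<or> d_(j-1), and c_k \<or> d_(j-1) \<equiv> c_k \<or> d_j with c_i \<or> d_(j-1), collapses the bottom
  of B_(i,j) onto its top.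
*)

lemma join_cong_grid: "join_cong n (grid n \<times> grid n)"
  unfolding join_cong_def equiv_def refl_on_def sym_def trans_def
  by (auto simp: grid_def gjoin_def)

lemma join_cong_Inter:
  assumes "A \<noteq> {}" and "\<And>\<alpha>. \<alpha> \<in> A \<Longrightarrow> join_cong n \<alpha>"
  shows "join_cong n (\<Inter> A)"
proof -
  have equiv: "\<And>\<alpha>. \<alpha> \<in> A \<Longrightarrow> equiv (grid n) \<alpha>"
    using assms(2) unfolding join_cong_def by blast
  have "equiv (grid n) (\<Inter> A)"
  proof (rule equivI)
    show "\<Inter> A \<subseteq> grid n \<times> grid n"
      using assms(1) equiv unfolding equiv_def by blast
    show "refl_on (grid n) (\<Inter> A)"
      using equiv unfolding equiv_def refl_on_def by blast
    show "sym (\<Inter> A)"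
      using sym_INTER[of A id] equiv unfolding equiv_def by simp
    show "trans (\<Inter> A)"
      using trans_INTER[of A id] equiv unfolding equiv_def by simp
  qed
  then show ?thesis
    using assms(2) unfolding join_cong_def by blast
qed

lemma join_cong_cong_gen:
  assumes "R \<subseteq> grid n \<times> grid n"
  shows "join_cong n (cong_gen n R)"
  unfolding cong_gen_def
  using assms join_cong_grid by (intro join_cong_Inter) auto

lemma cong_gen_least: "join_cong n \<alpha> \<Longrightarrow> R \<subseteq> \<alpha> \<Longrightarrow> cong_gen n R \<subseteq> \<alpha>"
  unfolding cong_gen_def by blast

lemma subset_cong_gen: "R \<subseteq> cong_gen n R"
  unfolding cong_gen_def by blast

lemma join_congD:
  assumes "join_cong n \<alpha>"
  shows join_cong_refl: "x \<in> grid n \<Longrightarrow> (x, x) \<in> \<alpha>"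
    and join_cong_trans: "(x, y) \<in> \<alpha> \<Longrightarrow> (y, z) \<in> \<alpha> \<Longrightarrow> (x, z) \<in> \<alpha>"
    and join_cong_gjoin: "(x, y) \<in> \<alpha> \<Longrightarrow> (u, v) \<in> \<alpha> \<Longrightarrow> (gjoin x u, gjoin y v) \<in> \<alpha>"
  using assms unfolding join_cong_def equiv_def refl_on_def trans_def by blast+

lemma triple_subset_grid: "i \<in> {1..n} \<Longrightarrow> j \<in> {1..n} \<Longrightarrow> triple i j \<subseteq> grid n"
  by (auto simp: triple_def grid_def)

lemma con_set_subset_grid: "S \<subseteq> grid n \<Longrightarrow> con_set n S \<subseteq> grid n \<times> grid n"
  unfolding con_set_def by (rule cong_gen_least[OF join_cong_grid]) blast

lemma join_cong_beta:
  assumes "\<pi> permutes {1..n}"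
  shows "join_cong n (beta n \<pi>)"
proof -
  have "con_set n (triple i (\<pi> i)) \<subseteq> grid n \<times> grid n" if "i \<in> {1..n}" for i
    using that permutes_in_image[OF assms] by (intro con_set_subset_grid triple_subset_grid) auto
  then have "\<Union> {con_set n (triple i (\<pi> i)) | i. i \<in> {1..n}} \<subseteq> grid n \<times> grid n"
    by blast
  then show ?thesis
    unfolding beta_def cong_Join_def by (rule join_cong_cong_gen)
qed

lemma triple_collapsed_in_beta:
  assumes "i \<in> {1..n}"
  shows "triple i (\<pi> i) \<times> triple i (\<pi> i) \<subseteq> beta n \<pi>"
proof -
  have "triple i (\<pi> i) \<times> triple i (\<pi> i) \<subseteq> con_set n (triple i (\<pi> i))"
    unfolding con_set_def by (rule subset_cong_gen)
  also have "\<dots> \<subseteq> \<Union> {con_set n (triple i (\<pi> i)) | i. i \<in> {1..n}}"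
    using assms by blast
  also have "\<dots> \<subseteq> beta n \<pi>"
    unfolding beta_def cong_Join_def by (rule subset_cong_gen)
  finally show ?thesis .
qed

lemma beta_least:
  assumes cong: "join_cong n \<alpha>"
    and gen: "\<And>i. i \<in> {1..n} \<Longrightarrow> triple i (\<pi> i) \<times> triple i (\<pi> i) \<subseteq> \<alpha>"
  shows "beta n \<pi> \<subseteq> \<alpha>"
proof -
  have "con_set n (triple i (\<pi> i)) \<subseteq> \<alpha>" if "i \<in> {1..n}" for i
    unfolding con_set_def using cong gen[OF that] by (rule cong_gen_least)
  then show ?thesis
    unfolding beta_def cong_Join_def using cong by (intro cong_gen_least) blast+
qed

definition below :: "nat \<times> nat \<Rightarrow> nat \<times> nat \<Rightarrow> bool" where
  "below x m \<longleftrightarrow> fst x \<le> fst m \<and> snd x \<le> snd m"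

definition ideal_cong :: "nat \<Rightarrow> nat \<times> nat \<Rightarrow> ((nat \<times> nat) \<times> (nat \<times> nat)) set" where
  "ideal_cong n m = {(x, y). x \<in> grid n \<and> y \<in> grid n \<and> (below x m \<longleftrightarrow> below y m)}"

lemma join_cong_ideal_cong: "join_cong n (ideal_cong n m)"
  unfolding join_cong_def equiv_def refl_on_def sym_def trans_def ideal_cong_def
  by (auto simp: grid_def gjoin_def below_def)

lemma triple_collapsed_in_ideal_cong:
  assumes \<pi>: "\<pi> permutes {1..n}" and k: "k \<in> {1..n}" and l: "l \<in> {1..n}"
  shows "triple l (\<pi> l) \<times> triple l (\<pi> l) \<subseteq> ideal_cong n (k - 1, \<pi> k - 1)"
proof (cases "l = k")
  case True
  have "\<pi> l \<in> {1..n}"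
    using permutes_in_image[OF \<pi>] l by auto
  then show ?thesis
    using True l unfolding triple_def ideal_cong_def below_def grid_def by auto
next
  case False
  have "\<pi> l \<in> {1..n}" "\<pi> k \<in> {1..n}"
    using permutes_in_image[OF \<pi>] k l by auto
  moreover have "\<pi> l \<noteq> \<pi> k"
    using False permutes_inj[OF \<pi>] by (auto dest: injD)
  ultimately show ?thesis
    using False k l unfolding triple_def ideal_cong_def below_def grid_def by auto
qed

lemma beta_subset_ideal_cong:
  assumes "\<pi> permutes {1..n}" and "k \<in> {1..n}"
  shows "beta n \<pi> \<subseteq> ideal_cong n (k - 1, \<pi> k - 1)"
  using assms by (intro beta_least join_cong_ideal_cong triple_collapsed_in_ideal_cong)

lemma source_cell_beta:
  assumes \<pi>: "\<pi> permutes {1..n}" and i: "i \<in> {1..n}"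
  shows "source_cell (beta n \<pi>) i (\<pi> i)"
proof -
  have "\<pi> i \<in> {1..n}"
    using permutes_in_image[OF \<pi>] i by auto
  then have "((i - 1, \<pi> i - 1), (i, \<pi> i)) \<notin> ideal_cong n (i - 1, \<pi> i - 1)"
    using i by (auto simp: ideal_cong_def below_def)
  then show ?thesis
    using beta_subset_ideal_cong[OF \<pi> i] triple_collapsed_in_beta[OF i]
    unfolding source_cell_def triple_def by blast
qed

lemma bottom_collapsed_in_beta:
  assumes \<pi>: "\<pi> permutes {1..n}" and i: "i \<in> {1..n}" and k: "k \<in> {1..n}"
    and "k < i" and "\<pi> i < \<pi> k"
  shows "((i - 1, \<pi> k - 1), (i, \<pi> k)) \<in> beta n \<pi>"
proof -
  let ?\<beta> = "beta n \<pi>"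
  have cong: "join_cong n ?\<beta>"
    using join_cong_beta[OF \<pi>] .
  have "\<pi> k \<in> {1..n}"
    using permutes_in_image[OF \<pi>] k by auto
  then have grid: "(i - 1, \<pi> k - 1) \<in> grid n" "(i, \<pi> k - 1) \<in> grid n"
    using i by (auto simp: grid_def)
  have "((i - 1, \<pi> i), (i, \<pi> i)) \<in> ?\<beta>" "((k, \<pi> k - 1), (k, \<pi> k)) \<in> ?\<beta>"
    using triple_collapsed_in_beta i k unfolding triple_def by blast+
  note edges = this[THEN join_cong_gjoin[OF cong], OF join_cong_refl[OF cong]]
  have "gjoin (i - 1, \<pi> i) (i - 1, \<pi> k - 1) = (i - 1, \<pi> k - 1)"
    "gjoin (i, \<pi> i) (i - 1, \<pi> k - 1) = (i, \<pi> k - 1)"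
    "gjoin (k, \<pi> k - 1) (i, \<pi> k - 1) = (i, \<pi> k - 1)"
    "gjoin (k, \<pi> k) (i, \<pi> k - 1) = (i, \<pi> k)"
    using \<open>k < i\<close> \<open>\<pi> i < \<pi> k\<close> by (auto simp: gjoin_def)
  then have "((i - 1, \<pi> k - 1), (i, \<pi> k - 1)) \<in> ?\<beta>" "((i, \<pi> k - 1), (i, \<pi> k)) \<in> ?\<beta>"
    using edges(1)[OF grid(1)] edges(2)[OF grid(2)] by simp_all
  then show ?thesis
    using join_cong_trans[OF cong] by blast
qed

lemma source_cell_beta_imp_eq:
  assumes \<pi>: "\<pi> permutes {1..n}" and i: "i \<in> {1..n}" and j: "j \<in> {1..n}"
    and cell: "source_cell (beta n \<pi>) i j"
  shows "j = \<pi> i"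
proof -
  obtain k where k: "k \<in> {1..n}" "\<pi> k = j"
    using j \<pi> by (metis permutes_def permutes_in_image)
  have edges: "((i - 1, j), (i, j)) \<in> beta n \<pi>" "((i, j - 1), (i, j)) \<in> beta n \<pi>"
    using cell unfolding source_cell_def by blast+
  consider "j = \<pi> i" | "j < \<pi> i" | "\<pi> i < j" "i < k" | "\<pi> i < j" "k < i"
    using k(2) by fastforce
  then show ?thesis
  proof cases
    case 1
    then show ?thesis .
  next
    case 2
    then show ?thesis
      using edges(1) beta_subset_ideal_cong[OF \<pi> i] i by (auto simp: ideal_cong_def below_def)
  next
    case 3
    then show ?thesis
      using edges(2) beta_subset_ideal_cong[OF \<pi> k(1)] k j by (auto simp: ideal_cong_def below_def)
  next
    case 4
    then show ?thesis
      using bottom_collapsed_in_beta[OF \<pi> i k(1)] cell k(2) unfolding source_cell_def by blast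
  qed
qed

theorem lemma4p8:
  fixes n :: nat and \<pi> :: "nat \<Rightarrow> nat"
  assumes "\<pi> permutes {1..n}"
  shows "{(i, j). i \<in> {1..n} \<and> j \<in> {1..n} \<and> source_cell (beta n \<pi>) i j}
           = {(i, \<pi> i) | i. i \<in> {1..n}}"
  using source_cell_beta_imp_eq[OF assms] source_cell_beta[OF assms]
    permutes_in_image[OF assms] by auto

end
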